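(* (Generalized Goursat lemma.) Let $G$ be a pseudosimple group, $k\ge 1$, and let $H\subseteq G^{[k]}$ be a subgroup that surjects onto each of the $k$ coordinate factors $G$. Then: (1) $H$ is isomorphic over $G^{\mathrm{ab}}$ to $G^{[w]}$ for some $w\le k$; (2) there are a surjection $f:\{1,\dots,k\}\to\{1,\dots,w\}$ and automorphisms $\varphi_1,\dots,\varphi_k$ of $G$ over $G^{\mathrm{ab}}$ such that $H$ is the image of $G^{[w]}$ under $(g_1,\dots,g_w)\mapsto(\varphi_1(g_{f(1)}),\dots,\varphi_k(g_{f(k)}))$.
   Context: $G'$ is the derived subgroup, $G^{\mathrm{ab}}=G/G'$. $G$ is pseudosimple if it is a finite centerless group, $G'$ is isomorphic to a power of a nonabelian simple group, and $G/N$ is abelian for every nontrivial normal subgroup $N$. $G^{[m]}=G\times_{G^{\mathrm{ab}}}\cdots\times_{G^{\mathrm{ab}}}G$ ($m$ factors) is the fiber power, mapping to $G^{\mathrm{ab}}$ via any coordinate; subgroups of it map to $G^{\mathrm{ab}}$ by restriction. For groups $G_1,G_2$ with homomorphisms $\pi_1,\pi_2$ to $Q$, an isomorphism over $Q$ is an isomorphism $i:G_1\to G_2$ with $\pi_2\circ i=\pi_1$; an automorphism of $G$ over $G^{\mathrm{ab}}$ is one inducing the identity on $G^{\mathrm{ab}}$. *)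

theory Defs
  imports "HOL-Algebra.Algebra"
begin

definition grp_center :: "('a, 'b) monoid_scheme \<Rightarrow> 'a set" where
  "grp_center G = {z \<in> carrier G. \<forall>x \<in> carrier G. z \<otimes>\<^bsub>G\<^esub> x = x \<otimes>\<^bsub>G\<^esub> z}"

text \<open>Derived subgroup G' and the abelianization map G -> G/G' (x maps to the coset G' x).\<close>
abbreviation commutator_sub :: "('a, 'b) monoid_scheme \<Rightarrow> 'a set" where
  "commutator_sub G \<equiv> derived G (carrier G)"

definition ab_map :: "('a, 'b) monoid_scheme \<Rightarrow> 'a \<Rightarrow> 'a set" where
  "ab_map G x = commutator_sub G #>\<^bsub>G\<^esub> x"

definition pseudosimple :: "('a, 'b) monoid_scheme \<Rightarrow> bool" where
  "pseudosimple G \<longleftrightarrow> group G \<and> finite (carrier G) \<and> grp_center G = {\<one>\<^bsub>G\<^esub>} \<and>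
     (\<exists>(S :: 'a monoid) (n :: nat). n \<ge> 1 \<and> simple_group S \<and> \<not> comm_group S \<and>
        G\<lparr>carrier := commutator_sub G\<rparr> \<cong> product_group {..<n} (\<lambda>_. S)) \<and>
     (\<forall>N. N \<lhd> G \<and> N \<noteq> {\<one>\<^bsub>G\<^esub>} \<longrightarrow> comm_group (G Mod N))"

text \<open>Fiber power G^[m] = G x_{G^ab} ... x_{G^ab} G, with coordinates indexed by {0..<m}.\<close>
definition fiber_power :: "('a, 'b) monoid_scheme \<Rightarrow> nat \<Rightarrow> (nat \<Rightarrow> 'a) monoid" where
  "fiber_power G m = (product_group {..<m} (\<lambda>_. G))
     \<lparr>carrier := {g \<in> (\<Pi>\<^sub>E i\<in>{..<m}. carrier G). \<forall>i<m. \<forall>j<m. ab_map G (g i) = ab_map G (g j)}\<rparr>"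

text \<open>Map of (a subset of) a fiber power to G^ab: via the first coordinate.\<close>
definition fp_ab :: "('a, 'b) monoid_scheme \<Rightarrow> (nat \<Rightarrow> 'a) \<Rightarrow> 'a set" where
  "fp_ab G g = ab_map G (g 0)"

definition aut_over_ab :: "('a, 'b) monoid_scheme \<Rightarrow> ('a \<Rightarrow> 'a) \<Rightarrow> bool" where
  "aut_over_ab G \<phi> \<longleftrightarrow> \<phi> \<in> iso G G \<and> (\<forall>x \<in> carrier G. ab_map G (\<phi> x) = ab_map G x)"

end

theory Submission
  imports Defs
begin

text \<open>The projection of \<open>H\<close> to the first \<open>k\<close> coordinates is, by induction, the
  image of some \<open>G\<^sup>[w]\<close> under a twisted diagonal map. Since \<open>H\<close> surjects onto the last factor, the
  slice \<open>N = {x. (1, \<dots>, 1, x) \<in> H}\<close> is normal in \<open>G\<close>. If \<open>N \<noteq> 1\<close>, then \<open>N \<supseteq> G'\<close>, so \<open>H\<close> is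
  the full fiber product of its projection with \<open>G\<close> over \<open>G\<^sup>a\<^sup>b\<close>, and the last coordinate becomes a
  new free coordinate. If \<open>N = 1\<close>, then \<open>H\<close> is the graph of a surjective homomorphism
  \<open>\<psi> : G\<^sup>[w] \<rightarrow> G\<close> over \<open>G\<^sup>a\<^sup>b\<close>. The images under \<open>\<psi>\<close> of the coordinate copies of \<open>G'\<close> are normal
  in \<open>G\<close>, hence trivial or containing \<open>G'\<close>; no two of them contain \<open>G'\<close> (they commute, and \<open>G'\<close>
  is nonabelian) and not all are trivial (else \<open>G\<close> would be abelian). So \<open>\<psi>\<close> only depends on one
  coordinate \<open>j\<close>, and \<open>\<psi>\<close> restricted to the diagonal is a surjective, hence (by finiteness)
  bijective, endomorphism of \<open>G\<close> over \<open>G\<^sup>a\<^sup>b\<close>.\<close>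

definition twisted_diagonal :: "nat \<Rightarrow> (nat \<Rightarrow> nat) \<Rightarrow> (nat \<Rightarrow> 'a \<Rightarrow> 'a) \<Rightarrow> (nat \<Rightarrow> 'a) \<Rightarrow> nat \<Rightarrow> 'a"
  where "twisted_diagonal k f \<phi> = (\<lambda>g. \<lambda>i\<in>{..<k}. \<phi> i (g (f i)))"

lemma image_fun_upd_lessThan_Suc: "f ` {..<k} = A \<Longrightarrow> (f(k := a)) ` {..<Suc k} = insert a A"
  by (auto simp: lessThan_Suc)

context group
begin

section \<open>Abelianization and fiber powers\<close>

lemma ab_map_mult:
  "x \<in> carrier G \<Longrightarrow> y \<in> carrier G \<Longrightarrow> ab_map G (x \<otimes> y) = ab_map G x <#> ab_map G y"
  unfolding ab_map_def using normal.rcos_sum[OF derived_self_is_normal] by simp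

lemma ab_map_eq_iff:
  assumes "x \<in> carrier G" "y \<in> carrier G"
  shows "ab_map G x = ab_map G y \<longleftrightarrow> x \<otimes> inv y \<in> commutator_sub G"
proof -
  have D: "subgroup (commutator_sub G) G" by (rule derived_is_subgroup) simp
  show ?thesis
  proof
    assume "ab_map G x = ab_map G y"
    then have "x \<in> commutator_sub G #> y"
      unfolding ab_map_def using repr_independenceD[OF D assms(1)] by simp
    then show "x \<otimes> inv y \<in> commutator_sub G"
      using subgroup.rcos_module_imp[OF D is_group assms(2)] by blast
  next
    assume "x \<otimes> inv y \<in> commutator_sub G"
    then have "x \<in> commutator_sub G #> y"
      using subgroup.rcos_module_rev[OF D is_group assms(2,1)] by blast
    then show "ab_map G x = ab_map G y"
      unfolding ab_map_def using repr_independence[OF _ assms(2) D] by simp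
  qed
qed

lemma ab_map_eq_iff_inv_mult:
  assumes "x \<in> carrier G" "y \<in> carrier G"
  shows "ab_map G x = ab_map G y \<longleftrightarrow> inv x \<otimes> y \<in> commutator_sub G"
proof -
  have conj: "a \<otimes> h \<otimes> inv a \<in> commutator_sub G" if "a \<in> carrier G" "h \<in> commutator_sub G" for a h
    using normal_invE(2)[OF derived_self_is_normal that] .
  have eq1: "inv x \<otimes> y = inv x \<otimes> (y \<otimes> inv x) \<otimes> inv (inv x)"
    using assms by (simp add: m_assoc)
  have eq2: "y \<otimes> inv x = x \<otimes> (inv x \<otimes> y) \<otimes> inv x"
    using assms by (simp add: m_assoc[symmetric])
  have "y \<otimes> inv x \<in> commutator_sub G \<longleftrightarrow> inv x \<otimes> y \<in> commutator_sub G"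
  proof
    assume "y \<otimes> inv x \<in> commutator_sub G"
    then show "inv x \<otimes> y \<in> commutator_sub G" by (subst eq1) (rule conj; use assms in simp)
  next
    assume "inv x \<otimes> y \<in> commutator_sub G"
    then show "y \<otimes> inv x \<in> commutator_sub G" by (subst eq2) (rule conj; use assms in simp)
  qed
  then show ?thesis using ab_map_eq_iff[OF assms(2,1)] by auto
qed

lemma ab_map_eq_one_iff: "x \<in> carrier G \<Longrightarrow> ab_map G x = ab_map G \<one> \<longleftrightarrow> x \<in> commutator_sub G"
  using ab_map_eq_iff by simp

lemma ab_map_inv_eq:
  "x \<in> carrier G \<Longrightarrow> y \<in> carrier G \<Longrightarrow> ab_map G x = ab_map G y \<Longrightarrow> ab_map G (inv x) = ab_map G (inv y)"
  using ab_map_eq_iff[of x y] ab_map_eq_iff_inv_mult[of "inv x" "inv y"] by simp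

lemma derived_subset_carrier: "commutator_sub G \<subseteq> carrier G"
  by (rule derived_in_carrier) simp

lemma commutator_in_derived: "x \<in> carrier G \<Longrightarrow> y \<in> carrier G \<Longrightarrow> x \<otimes> y \<otimes> inv x \<otimes> inv y \<in> commutator_sub G"
  unfolding derived_def by (rule generate.incl) blast

lemma swap_mult_commutator_eq:
  assumes "x \<in> carrier G" "y \<in> carrier G"
  shows "y \<otimes> x \<otimes> (inv x \<otimes> inv y \<otimes> x \<otimes> y) = x \<otimes> y"
proof -
  have "y \<otimes> x \<otimes> (inv x \<otimes> inv y \<otimes> x \<otimes> y) = y \<otimes> (x \<otimes> inv x) \<otimes> inv y \<otimes> x \<otimes> y"
    using assms by (simp only: m_assoc inv_closed m_closed)
  also have "\<dots> = x \<otimes> y" using assms by simp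
  finally show ?thesis .
qed

lemma carrier_fiber_power:
  "carrier (fiber_power G m) =
     {g \<in> (\<Pi>\<^sub>E i\<in>{..<m}. carrier G). \<forall>i<m. \<forall>j<m. ab_map G (g i) = ab_map G (g j)}"
  by (simp add: fiber_power_def)

lemma mult_fiber_power [simp]: "x \<otimes>\<^bsub>fiber_power G m\<^esub> y = (\<lambda>i\<in>{..<m}. x i \<otimes> y i)"
  by (simp add: fiber_power_def)

lemma one_fiber_power [simp]: "\<one>\<^bsub>fiber_power G m\<^esub> = (\<lambda>i\<in>{..<m}. \<one>)"
  by (simp add: fiber_power_def)

lemma fiber_powerI:
  assumes "\<And>i. i < m \<Longrightarrow> g i \<in> carrier G" "g \<in> extensional {..<m}"
    and "\<And>i j. i < m \<Longrightarrow> j < m \<Longrightarrow> ab_map G (g i) = ab_map G (g j)"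
  shows "g \<in> carrier (fiber_power G m)"
proof -
  have "g \<in> (\<Pi>\<^sub>E i\<in>{..<m}. carrier G)" using assms(1,2) by (auto simp: PiE_iff)
  then show ?thesis using assms(3) unfolding carrier_fiber_power by blast
qed

lemma fiber_powerD:
  assumes "g \<in> carrier (fiber_power G m)"
  shows fiber_power_PiE: "g \<in> (\<Pi>\<^sub>E i\<in>{..<m}. carrier G)"
    and fiber_power_coord: "\<And>i. i < m \<Longrightarrow> g i \<in> carrier G"
    and fiber_power_extensional: "g \<in> extensional {..<m}"
    and fiber_power_ab_map_eq: "\<And>i j. i < m \<Longrightarrow> j < m \<Longrightarrow> ab_map G (g i) = ab_map G (g j)"
proof -
  show g: "g \<in> (\<Pi>\<^sub>E i\<in>{..<m}. carrier G)"
    using assms unfolding carrier_fiber_power by blast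
  show "\<And>i. i < m \<Longrightarrow> g i \<in> carrier G" using g by auto
  show "g \<in> extensional {..<m}" using g by (simp add: PiE_iff)
  show "\<And>i j. i < m \<Longrightarrow> j < m \<Longrightarrow> ab_map G (g i) = ab_map G (g j)"
    using assms unfolding carrier_fiber_power by blast
qed

lemma diagonal_in_fiber_power: "x \<in> carrier G \<Longrightarrow> (\<lambda>i\<in>{..<m}. x) \<in> carrier (fiber_power G m)"
  by (rule fiber_powerI) auto

lemma subgroup_fiber_power: "subgroup (carrier (fiber_power G m)) (product_group {..<m} (\<lambda>_. G))"
proof (rule group.subgroupI)
  show "group (product_group {..<m} (\<lambda>_. G))" by (simp add: is_group)
  show "carrier (fiber_power G m) \<subseteq> carrier (product_group {..<m} (\<lambda>_. G))"
    using fiber_power_PiE by auto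
  show "carrier (fiber_power G m) \<noteq> {}"
    using diagonal_in_fiber_power[OF one_closed] by blast
next
  fix g assume g: "g \<in> carrier (fiber_power G m)"
  have "(\<lambda>i\<in>{..<m}. inv (g i)) \<in> carrier (fiber_power G m)"
  proof (rule fiber_powerI)
    fix i j assume ij: "i < m" "j < m"
    then show "ab_map G ((\<lambda>i\<in>{..<m}. inv (g i)) i) = ab_map G ((\<lambda>i\<in>{..<m}. inv (g i)) j)"
      using ab_map_inv_eq[OF fiber_power_coord[OF g ij(1)] fiber_power_coord[OF g ij(2)]
          fiber_power_ab_map_eq[OF g ij]] by simp
  qed (use fiber_power_coord[OF g] in auto)
  then show "inv\<^bsub>product_group {..<m} (\<lambda>_. G)\<^esub> g \<in> carrier (fiber_power G m)"
    using inv_product_group[OF fiber_power_PiE[OF g]] is_group by simp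
next
  fix g h assume g: "g \<in> carrier (fiber_power G m)" and h: "h \<in> carrier (fiber_power G m)"
  have "(\<lambda>i\<in>{..<m}. g i \<otimes> h i) \<in> carrier (fiber_power G m)"
  proof (rule fiber_powerI)
    fix i j assume ij: "i < m" "j < m"
    then show "ab_map G ((\<lambda>i\<in>{..<m}. g i \<otimes> h i) i) = ab_map G ((\<lambda>i\<in>{..<m}. g i \<otimes> h i) j)"
      using fiber_power_ab_map_eq[OF g ij] fiber_power_ab_map_eq[OF h ij]
      by (simp add: ab_map_mult fiber_power_coord[OF g] fiber_power_coord[OF h])
  qed (use fiber_power_coord[OF g] fiber_power_coord[OF h] in auto)
  then show "g \<otimes>\<^bsub>product_group {..<m} (\<lambda>_. G)\<^esub> h \<in> carrier (fiber_power G m)" by simp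
qed

lemma fiber_power_eq:
  "fiber_power G m = (product_group {..<m} (\<lambda>_. G))\<lparr>carrier := carrier (fiber_power G m)\<rparr>"
  by (simp add: fiber_power_def)

lemma group_fiber_power: "group (fiber_power G m)"
proof -
  have "group ((product_group {..<m} (\<lambda>_. G))\<lparr>carrier := carrier (fiber_power G m)\<rparr>)"
    using group.subgroup_imp_group[OF _ subgroup_fiber_power] is_group by simp
  then show ?thesis by (metis fiber_power_eq)
qed

lemma inv_fiber_power [simp]:
  assumes g: "g \<in> carrier (fiber_power G m)"
  shows "inv\<^bsub>fiber_power G m\<^esub> g = (\<lambda>i\<in>{..<m}. inv (g i))"
proof -
  have "inv\<^bsub>fiber_power G m\<^esub> g =
      inv\<^bsub>(product_group {..<m} (\<lambda>_. G))\<lparr>carrier := carrier (fiber_power G m)\<rparr>\<^esub> g"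
    by (metis fiber_power_eq)
  also have "\<dots> = inv\<^bsub>product_group {..<m} (\<lambda>_. G)\<^esub> g"
    by (rule group.m_inv_consistent[OF _ subgroup_fiber_power g]) (simp add: is_group)
  also have "\<dots> = (\<lambda>i\<in>{..<m}. inv (g i))"
    using inv_product_group[OF fiber_power_PiE[OF g]] is_group by simp
  finally show ?thesis .
qed

lemma derived_power_subset_fiber_power:
  "(\<Pi>\<^sub>E i\<in>{..<m}. commutator_sub G) \<subseteq> carrier (fiber_power G m)"
proof
  fix g assume g: "g \<in> (\<Pi>\<^sub>E i\<in>{..<m}. commutator_sub G)"
  then have D: "g i \<in> commutator_sub G" if "i < m" for i using that by auto
  then have c: "g i \<in> carrier G" if "i < m" for i using that derived_subset_carrier by blast
  show "g \<in> carrier (fiber_power G m)"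
  proof (rule fiber_powerI)
    fix i j assume "i < m" "j < m"
    then show "ab_map G (g i) = ab_map G (g j)"
      using ab_map_eq_one_iff[OF c[OF \<open>i < m\<close>]] ab_map_eq_one_iff[OF c[OF \<open>j < m\<close>]] D by simp
  qed (use g c in \<open>auto simp: PiE_iff\<close>)
qed

lemma restrict_hom_fiber_power:
  "k \<le> m \<Longrightarrow> (\<lambda>g. restrict g {..<k}) \<in> hom (fiber_power G m) (fiber_power G k)"
proof (rule homI)
  fix g assume km: "k \<le> m" and g: "g \<in> carrier (fiber_power G m)"
  show "restrict g {..<k} \<in> carrier (fiber_power G k)"
  proof (rule fiber_powerI)
    fix i j assume "i < k" "j < k"
    then show "ab_map G (restrict g {..<k} i) = ab_map G (restrict g {..<k} j)"
      using fiber_power_ab_map_eq[OF g, of i j] km by simp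
  qed (use fiber_power_coord[OF g] km in auto)
qed (auto intro: restrict_ext)

section \<open>Twisted diagonal maps\<close>

lemma aut_over_abD:
  assumes "aut_over_ab G \<phi>" and "x \<in> carrier G"
  shows aut_over_ab_closed: "\<phi> x \<in> carrier G"
    and aut_over_ab_ab_map: "ab_map G (\<phi> x) = ab_map G x"
  using assms by (auto simp: aut_over_ab_def iso_def hom_def)

lemma aut_over_ab_mult:
  "aut_over_ab G \<phi> \<Longrightarrow> x \<in> carrier G \<Longrightarrow> y \<in> carrier G \<Longrightarrow> \<phi> (x \<otimes> y) = \<phi> x \<otimes> \<phi> y"
  by (auto simp: aut_over_ab_def iso_def hom_def)

lemma aut_over_ab_inj: "aut_over_ab G \<phi> \<Longrightarrow> inj_on \<phi> (carrier G)"
  by (simp add: aut_over_ab_def iso_iff)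

lemma aut_over_ab_id: "aut_over_ab G (\<lambda>x. x)"
  by (simp add: aut_over_ab_def iso_set_refl)

lemma twisted_diagonal_in_fiber_power:
  assumes f: "f \<in> {..<k} \<rightarrow> {..<w}" and \<phi>: "\<forall>i<k. aut_over_ab G (\<phi> i)"
    and g: "g \<in> carrier (fiber_power G w)"
  shows "twisted_diagonal k f \<phi> g \<in> carrier (fiber_power G k)"
proof -
  have fi: "f i < w" if "i < k" for i using f that by auto
  show ?thesis
  proof (rule fiber_powerI)
    fix i j assume ij: "i < k" "j < k"
    have "ab_map G (\<phi> i (g (f i))) = ab_map G (g (f i))"
      using aut_over_ab_ab_map \<phi> ij(1) fiber_power_coord[OF g fi[OF ij(1)]] by blast
    also have "\<dots> = ab_map G (g (f j))" using fiber_power_ab_map_eq[OF g fi[OF ij(1)] fi[OF ij(2)]] .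
    also have "\<dots> = ab_map G (\<phi> j (g (f j)))"
      using aut_over_ab_ab_map \<phi> ij(2) fiber_power_coord[OF g fi[OF ij(2)]] by metis
    finally show "ab_map G (twisted_diagonal k f \<phi> g i) = ab_map G (twisted_diagonal k f \<phi> g j)"
      using ij by (simp add: twisted_diagonal_def)
  qed (use fi \<phi> aut_over_ab_closed fiber_power_coord[OF g] in \<open>auto simp: twisted_diagonal_def\<close>)
qed

lemma twisted_diagonal_hom:
  assumes "f \<in> {..<k} \<rightarrow> {..<w}" and "\<forall>i<k. aut_over_ab G (\<phi> i)"
  shows "twisted_diagonal k f \<phi> \<in> hom (fiber_power G w) (fiber_power G k)"
proof (rule homI)
  fix g h assume g: "g \<in> carrier (fiber_power G w)" and h: "h \<in> carrier (fiber_power G w)"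
  show "twisted_diagonal k f \<phi> (g \<otimes>\<^bsub>fiber_power G w\<^esub> h)
      = twisted_diagonal k f \<phi> g \<otimes>\<^bsub>fiber_power G k\<^esub> twisted_diagonal k f \<phi> h"
    using assms aut_over_ab_mult fiber_power_coord[OF g] fiber_power_coord[OF h]
    by (auto simp: twisted_diagonal_def Pi_iff intro!: restrict_ext)
qed (use assms twisted_diagonal_in_fiber_power in blast)

lemma inj_on_twisted_diagonal:
  assumes f: "f ` {..<k} = {..<w}" and \<phi>: "\<forall>i<k. aut_over_ab G (\<phi> i)"
  shows "inj_on (twisted_diagonal k f \<phi>) (carrier (fiber_power G w))"
proof
  fix g h assume g: "g \<in> carrier (fiber_power G w)" and h: "h \<in> carrier (fiber_power G w)"
    and eq: "twisted_diagonal k f \<phi> g = twisted_diagonal k f \<phi> h"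
  show "g = h"
  proof (rule extensionalityI[OF fiber_power_extensional[OF g] fiber_power_extensional[OF h]])
    fix j assume "j \<in> {..<w}"
    then obtain i where i: "i < k" "j = f i" using f by (metis imageE lessThan_iff)
    have "\<phi> i (g j) = \<phi> i (h j)" using fun_cong[OF eq, of i] i by (simp add: twisted_diagonal_def)
    then show "g j = h j"
      using aut_over_ab_inj[of "\<phi> i"] \<phi> i \<open>j \<in> {..<w}\<close> fiber_power_coord[OF g] fiber_power_coord[OF h]
      by (auto dest: inj_onD)
  qed
qed

lemma twisted_diagonal_restrict:
  "f \<in> {..<k} \<rightarrow> {..<w} \<Longrightarrow> twisted_diagonal k f \<phi> (restrict g {..<w}) = twisted_diagonal k f \<phi> g"
  by (auto simp: twisted_diagonal_def intro!: restrict_ext)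

lemma twisted_diagonal_id_image:
  "twisted_diagonal m (\<lambda>i. i) (\<lambda>_ x. x) ` carrier (fiber_power G m) = carrier (fiber_power G m)"
proof -
  have "twisted_diagonal m (\<lambda>i. i) (\<lambda>_ x. x) g = g" if "g \<in> carrier (fiber_power G m)" for g
    using fiber_power_extensional[OF that] by (simp add: twisted_diagonal_def extensional_restrict)
  then show ?thesis by (simp cong: image_cong)
qed

lemma twisted_diagonal_Suc_eq_iff:
  assumes "h \<in> extensional {..<Suc k}"
  shows "h = twisted_diagonal (Suc k) (f(k := a)) (\<phi>(k := \<tau>)) g
     \<longleftrightarrow> restrict h {..<k} = twisted_diagonal k f \<phi> g \<and> h k = \<tau> (g a)"
proof
  assume "h = twisted_diagonal (Suc k) (f(k := a)) (\<phi>(k := \<tau>)) g"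
  then show "restrict h {..<k} = twisted_diagonal k f \<phi> g \<and> h k = \<tau> (g a)"
    by (auto simp: twisted_diagonal_def intro!: restrict_ext)
next
  assume r: "restrict h {..<k} = twisted_diagonal k f \<phi> g \<and> h k = \<tau> (g a)"
  show "h = twisted_diagonal (Suc k) (f(k := a)) (\<phi>(k := \<tau>)) g"
  proof (rule extensionalityI[OF assms])
    show "twisted_diagonal (Suc k) (f(k := a)) (\<phi>(k := \<tau>)) g \<in> extensional {..<Suc k}"
      by (simp add: twisted_diagonal_def)
    fix i assume "i \<in> {..<Suc k}"
    then consider "i < k" | "i = k" by fastforce
    then show "h i = twisted_diagonal (Suc k) (f(k := a)) (\<phi>(k := \<tau>)) g i"
      using conjunct2[OF r] fun_cong[OF conjunct1[OF r], of i] by cases (auto simp: twisted_diagonal_def)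
  qed
qed

lemma fp_ab_twisted_diagonal:
  assumes "0 < k" and "f \<in> {..<k} \<rightarrow> {..<w}" and "\<forall>i<k. aut_over_ab G (\<phi> i)"
    and g: "g \<in> carrier (fiber_power G w)"
  shows "fp_ab G (twisted_diagonal k f \<phi> g) = fp_ab G g"
proof -
  have f0: "f 0 < w" using assms(1,2) by auto
  have "fp_ab G (twisted_diagonal k f \<phi> g) = ab_map G (g (f 0))"
    using assms(1,3) aut_over_ab_ab_map fiber_power_coord[OF g f0]
    by (simp add: fp_ab_def twisted_diagonal_def)
  also have "\<dots> = fp_ab G g" using fiber_power_ab_map_eq[OF g f0, of 0] f0 by (simp add: fp_ab_def)
  finally show ?thesis .
qed

lemma twisted_diagonal_iso:
  assumes f: "f ` {..<k} = {..<w}" and \<phi>: "\<forall>i<k. aut_over_ab G (\<phi> i)"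
  shows "twisted_diagonal k f \<phi> \<in> iso (fiber_power G w)
           ((fiber_power G k)\<lparr>carrier := twisted_diagonal k f \<phi> ` carrier (fiber_power G w)\<rparr>)"
proof -
  have "twisted_diagonal k f \<phi> \<in> hom (fiber_power G w) (fiber_power G k)"
    using twisted_diagonal_hom f \<phi> by blast
  then have "twisted_diagonal k f \<phi> \<in> hom (fiber_power G w)
      ((fiber_power G k)\<lparr>carrier := twisted_diagonal k f \<phi> ` carrier (fiber_power G w)\<rparr>)"
    by (auto simp: hom_def)
  then show ?thesis using inj_on_twisted_diagonal[OF f \<phi>] by (simp add: iso_iff)
qed

section \<open>Coordinate copies of \<open>G\<close> in a fiber power\<close>

definition coord_embed :: "nat \<Rightarrow> nat \<Rightarrow> 'a \<Rightarrow> nat \<Rightarrow> 'a"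
  where "coord_embed m j x = (\<lambda>i\<in>{..<m}. if i = j then x else \<one>)"

lemma coord_embed_in_fiber_power:
  "x \<in> commutator_sub G \<Longrightarrow> coord_embed m j x \<in> carrier (fiber_power G m)"
proof -
  assume "x \<in> commutator_sub G"
  then have "coord_embed m j x \<in> (\<Pi>\<^sub>E i\<in>{..<m}. commutator_sub G)"
    using subgroup.one_closed[OF derived_is_subgroup] by (auto simp: coord_embed_def)
  then show ?thesis using derived_power_subset_fiber_power by blast
qed

lemma coord_embed_mult:
  "x \<in> carrier G \<Longrightarrow> y \<in> carrier G \<Longrightarrow>
     coord_embed m j x \<otimes>\<^bsub>fiber_power G m\<^esub> coord_embed m j y = coord_embed m j (x \<otimes> y)"
  by (auto simp: coord_embed_def intro!: restrict_ext)

lemma coord_embed_one: "coord_embed m j \<one> = \<one>\<^bsub>fiber_power G m\<^esub>"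
  by (auto simp: coord_embed_def intro!: restrict_ext)

lemma normal_coord_embed: "j < m \<Longrightarrow> coord_embed m j ` commutator_sub G \<lhd> fiber_power G m"
proof -
  assume j: "j < m"
  interpret P: group "fiber_power G m" by (rule group_fiber_power)
  have D: "subgroup (commutator_sub G) G" by (rule derived_is_subgroup) simp
  show ?thesis
  proof (rule P.normal_invI)
    show "subgroup (coord_embed m j ` commutator_sub G) (fiber_power G m)"
    proof (rule P.subgroupI)
      show "coord_embed m j ` commutator_sub G \<subseteq> carrier (fiber_power G m)"
        using coord_embed_in_fiber_power by blast
      show "coord_embed m j ` commutator_sub G \<noteq> {}" using subgroup.one_closed[OF D] by blast
    next
      fix e assume "e \<in> coord_embed m j ` commutator_sub G"
      then obtain x where x: "x \<in> commutator_sub G" "e = coord_embed m j x" by blast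
      have "inv\<^bsub>fiber_power G m\<^esub> e = coord_embed m j (inv x)"
        using x coord_embed_in_fiber_power by (auto simp: coord_embed_def intro!: restrict_ext)
      then show "inv\<^bsub>fiber_power G m\<^esub> e \<in> coord_embed m j ` commutator_sub G"
        using subgroup.m_inv_closed[OF D x(1)] by simp
    next
      fix e e' assume "e \<in> coord_embed m j ` commutator_sub G" "e' \<in> coord_embed m j ` commutator_sub G"
      then obtain x y where xy: "x \<in> commutator_sub G" "y \<in> commutator_sub G"
        and "e = coord_embed m j x" "e' = coord_embed m j y" by blast
      moreover have "x \<in> carrier G" "y \<in> carrier G" using xy derived_subset_carrier by auto
      ultimately have "e \<otimes>\<^bsub>fiber_power G m\<^esub> e' = coord_embed m j (x \<otimes> y)"
        using coord_embed_mult by simp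
      then show "e \<otimes>\<^bsub>fiber_power G m\<^esub> e' \<in> coord_embed m j ` commutator_sub G"
        using subgroup.m_closed[OF D xy] by simp
    qed
  next
    fix g e assume g: "g \<in> carrier (fiber_power G m)" and "e \<in> coord_embed m j ` commutator_sub G"
    then obtain x where x: "x \<in> commutator_sub G" "e = coord_embed m j x" by blast
    have "g \<otimes>\<^bsub>fiber_power G m\<^esub> e \<otimes>\<^bsub>fiber_power G m\<^esub> inv\<^bsub>fiber_power G m\<^esub> g
        = coord_embed m j (g j \<otimes> x \<otimes> inv (g j))"
      using x g fiber_power_coord[OF g] derived_subset_carrier
      by (auto simp: coord_embed_def intro!: restrict_ext)
    then show "g \<otimes>\<^bsub>fiber_power G m\<^esub> e \<otimes>\<^bsub>fiber_power G m\<^esub> inv\<^bsub>fiber_power G m\<^esub> g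
        \<in> coord_embed m j ` commutator_sub G"
      using normal_invE(2)[OF derived_self_is_normal fiber_power_coord[OF g j] x(1)] by simp
  qed
qed

lemma subgroup_contains_derived_power:
  assumes K: "subgroup K (fiber_power G m)"
    and coords: "\<And>i. i < m \<Longrightarrow> i \<in> I \<Longrightarrow> coord_embed m i ` commutator_sub G \<subseteq> K"
    and g: "g \<in> (\<Pi>\<^sub>E i\<in>{..<m}. commutator_sub G)" and outside: "\<And>i. i < m \<Longrightarrow> i \<notin> I \<Longrightarrow> g i = \<one>"
  shows "g \<in> K"
proof -
  have "g \<in> K" if "n \<le> m" "g \<in> (\<Pi>\<^sub>E i\<in>{..<m}. commutator_sub G)"
    "\<forall>i<m. i \<notin> I \<or> n \<le> i \<longrightarrow> g i = \<one>" for n g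
    using that
  proof (induction n arbitrary: g)
    case 0
    then have "g = \<one>\<^bsub>fiber_power G m\<^esub>" by (auto simp: PiE_iff intro!: extensionalityI)
    then show ?case using subgroup.one_closed[OF K] by metis
  next
    case (Suc n)
    then have n: "n < m" by simp
    have gn: "g n \<in> commutator_sub G" using Suc.prems(2) n by auto
    have gc: "g i \<in> carrier G" if "i < m" for i using Suc.prems(2) that derived_subset_carrier by auto
    have g': "g(n := \<one>) \<in> K"
      using Suc.prems subgroup.one_closed[OF derived_is_subgroup]
      by (intro Suc.IH) (auto simp: PiE_iff extensional_def)
    have e: "coord_embed m n (g n) \<in> K"
      using coords[OF n] gn Suc.prems(3) n coord_embed_one subgroup.one_closed[OF K] by (cases "n \<in> I") auto
    have eq: "g = g(n := \<one>) \<otimes>\<^bsub>fiber_power G m\<^esub> coord_embed m n (g n)"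
    proof (rule extensionalityI)
      show "g \<in> extensional {..<m}" using Suc.prems(2) by (simp add: PiE_iff)
      fix i assume "i \<in> {..<m}"
      then show "g i = (g(n := \<one>) \<otimes>\<^bsub>fiber_power G m\<^esub> coord_embed m n (g n)) i"
        using gc by (cases "i = n") (simp_all add: coord_embed_def)
    qed simp
    show ?case by (subst eq) (rule subgroup.m_closed[OF K g' e])
  qed
  moreover have "\<forall>i<m. i \<notin> I \<or> m \<le> i \<longrightarrow> g i = \<one>" using outside by auto
  ultimately show ?thesis using g order_refl by blast
qed

section \<open>Subgroups of fiber powers with surjective projections\<close>

definition coord_slice :: "(nat \<Rightarrow> 'a) set \<Rightarrow> nat \<Rightarrow> nat \<Rightarrow> 'a set"
  where "coord_slice H m j = {x \<in> carrier G. coord_embed m j x \<in> H}"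

lemma subgroup_fiber_power_one:
  assumes H: "subgroup H (fiber_power G 1)" and surj: "(\<lambda>h. h 0) ` H = carrier G"
  shows "H = carrier (fiber_power G 1)"
proof
  show "H \<subseteq> carrier (fiber_power G 1)" using subgroup.subset[OF H] .
  show "carrier (fiber_power G 1) \<subseteq> H"
  proof
    fix g assume g: "g \<in> carrier (fiber_power G 1)"
    then have "g 0 \<in> (\<lambda>h. h 0) ` H" using surj fiber_power_coord[OF g, of 0] by simp
    then obtain h where h: "h \<in> H" "h 0 = g 0" by (metis imageE)
    then have "h \<in> carrier (fiber_power G 1)" using subgroup.subset[OF H] by blast
    then have "h = g"
      using h(2) fiber_power_extensional[OF g] by (auto intro!: extensionalityI dest: fiber_power_extensional)
    then show "g \<in> H" using h(1) by simp
  qed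
qed

lemma normal_coord_slice:
  assumes H: "subgroup H (fiber_power G m)" and j: "j < m" and surj: "(\<lambda>h. h j) ` H = carrier G"
  shows "coord_slice H m j \<lhd> G"
proof -
  have E: "coord_embed m j x \<in> carrier (fiber_power G m)" if "x \<in> coord_slice H m j" for x
    using that subgroup.subset[OF H] by (auto simp: coord_slice_def)
  have "subgroup (coord_slice H m j) G"
  proof (rule subgroupI)
    show "coord_slice H m j \<subseteq> carrier G" by (auto simp: coord_slice_def)
    show "coord_slice H m j \<noteq> {}"
      using subgroup.one_closed[OF H] coord_embed_one by (auto simp: coord_slice_def)
  next
    fix x assume x: "x \<in> coord_slice H m j"
    have "inv\<^bsub>fiber_power G m\<^esub> coord_embed m j x = coord_embed m j (inv x)"
      using E[OF x] by (auto simp: coord_embed_def intro!: restrict_ext)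
    then show "inv x \<in> coord_slice H m j"
      using subgroup.m_inv_closed[OF H, of "coord_embed m j x"] x
      by (auto simp: coord_slice_def simp del: inv_fiber_power)
  next
    fix x y assume x: "x \<in> coord_slice H m j" and y: "y \<in> coord_slice H m j"
    then have "coord_embed m j x \<otimes>\<^bsub>fiber_power G m\<^esub> coord_embed m j y \<in> H"
      using subgroup.m_closed[OF H] by (auto simp: coord_slice_def simp del: mult_fiber_power)
    then show "x \<otimes> y \<in> coord_slice H m j"
      using x y coord_embed_mult by (auto simp: coord_slice_def simp del: mult_fiber_power)
  qed
  moreover have "a \<otimes> x \<otimes> inv a \<in> coord_slice H m j" if a: "a \<in> carrier G" and x: "x \<in> coord_slice H m j" for a x
  proof -
    obtain h where h: "h \<in> H" "h j = a" using surj a by (metis imageE)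
    have hc: "h \<in> carrier (fiber_power G m)" using h(1) subgroup.subset[OF H] by blast
    have xc: "x \<in> carrier G" using x by (simp add: coord_slice_def)
    have "h \<otimes>\<^bsub>fiber_power G m\<^esub> coord_embed m j x \<otimes>\<^bsub>fiber_power G m\<^esub> inv\<^bsub>fiber_power G m\<^esub> h
        = coord_embed m j (a \<otimes> x \<otimes> inv a)"
      using hc h(2) xc fiber_power_coord[OF hc] by (auto simp: coord_embed_def intro!: restrict_ext)
    moreover have "h \<otimes>\<^bsub>fiber_power G m\<^esub> coord_embed m j x \<otimes>\<^bsub>fiber_power G m\<^esub> inv\<^bsub>fiber_power G m\<^esub> h \<in> H"
      using h(1) x subgroup.m_closed[OF H] subgroup.m_inv_closed[OF H]
      by (auto simp: coord_slice_def simp del: mult_fiber_power inv_fiber_power)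
    ultimately show ?thesis using a xc by (auto simp: coord_slice_def)
  qed
  ultimately show ?thesis by (rule normal_invI)
qed

lemma subgroup_eq_preimage_restrict:
  assumes H: "subgroup H (fiber_power G (Suc k))" and k: "0 < k"
    and slice: "commutator_sub G \<subseteq> coord_slice H (Suc k) k"
  shows "H = {h \<in> carrier (fiber_power G (Suc k)). restrict h {..<k} \<in> (\<lambda>h. restrict h {..<k}) ` H}"
proof
  show "H \<subseteq> {h \<in> carrier (fiber_power G (Suc k)). restrict h {..<k} \<in> (\<lambda>h. restrict h {..<k}) ` H}"
    using subgroup.subset[OF H] by blast
  show "{h \<in> carrier (fiber_power G (Suc k)). restrict h {..<k} \<in> (\<lambda>h. restrict h {..<k}) ` H} \<subseteq> H"
  proof
    fix h assume "h \<in> {h \<in> carrier (fiber_power G (Suc k)). restrict h {..<k} \<in> (\<lambda>h. restrict h {..<k}) ` H}"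
    then obtain h0 where h: "h \<in> carrier (fiber_power G (Suc k))"
      and h0: "h0 \<in> H" "restrict h {..<k} = restrict h0 {..<k}" by blast
    have h0c: "h0 \<in> carrier (fiber_power G (Suc k))" using h0(1) subgroup.subset[OF H] by blast
    have agree: "h0 i = h i" if "i < k" for i using fun_cong[OF h0(2), of i] that by simp
    have "ab_map G (h0 k) = ab_map G (h0 0)" using fiber_power_ab_map_eq[OF h0c, of k 0] by simp
    also have "\<dots> = ab_map G (h k)" using agree[OF k] fiber_power_ab_map_eq[OF h, of 0 k] by simp
    finally have "inv (h0 k) \<otimes> h k \<in> commutator_sub G"
      using ab_map_eq_iff_inv_mult fiber_power_coord[OF h0c] fiber_power_coord[OF h] by simp
    then have E: "coord_embed (Suc k) k (inv (h0 k) \<otimes> h k) \<in> H"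
      using slice by (auto simp: coord_slice_def)
    have eq: "h = h0 \<otimes>\<^bsub>fiber_power G (Suc k)\<^esub> coord_embed (Suc k) k (inv (h0 k) \<otimes> h k)"
    proof (rule extensionalityI[OF fiber_power_extensional[OF h]])
      fix i assume "i \<in> {..<Suc k}"
      then consider "i < k" | "i = k" by fastforce
      then show "h i = (h0 \<otimes>\<^bsub>fiber_power G (Suc k)\<^esub> coord_embed (Suc k) k (inv (h0 k) \<otimes> h k)) i"
        using agree fiber_power_coord[OF h] fiber_power_coord[OF h0c]
        by cases (simp_all add: coord_embed_def m_assoc[symmetric])
    qed simp
    show "h \<in> H" by (subst eq) (rule subgroup.m_closed[OF H h0(1) E])
  qed
qed

lemma inj_on_restrict_subgroup:
  assumes H: "subgroup H (fiber_power G (Suc k))" and slice: "coord_slice H (Suc k) k = {\<one>}"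
  shows "inj_on (\<lambda>h. restrict h {..<k}) H"
proof
  fix h1 h2 assume h1: "h1 \<in> H" and h2: "h2 \<in> H" and eq: "restrict h1 {..<k} = restrict h2 {..<k}"
  have c1: "h1 \<in> carrier (fiber_power G (Suc k))" and c2: "h2 \<in> carrier (fiber_power G (Suc k))"
    using h1 h2 subgroup.subset[OF H] by blast+
  have agree: "h1 i = h2 i" if "i < k" for i using fun_cong[OF eq, of i] that by simp
  have "h1 \<otimes>\<^bsub>fiber_power G (Suc k)\<^esub> inv\<^bsub>fiber_power G (Suc k)\<^esub> h2 = coord_embed (Suc k) k (h1 k \<otimes> inv (h2 k))"
  proof (rule extensionalityI)
    fix i assume "i \<in> {..<Suc k}"
    then consider "i < k" | "i = k" by fastforce
    then show "(h1 \<otimes>\<^bsub>fiber_power G (Suc k)\<^esub> inv\<^bsub>fiber_power G (Suc k)\<^esub> h2) i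
        = coord_embed (Suc k) k (h1 k \<otimes> inv (h2 k)) i"
      using agree c2 fiber_power_coord[OF c2] by cases (simp_all add: coord_embed_def)
  qed (simp_all add: coord_embed_def)
  moreover have "h1 \<otimes>\<^bsub>fiber_power G (Suc k)\<^esub> inv\<^bsub>fiber_power G (Suc k)\<^esub> h2 \<in> H"
    using subgroup.m_closed[OF H h1 subgroup.m_inv_closed[OF H h2]] .
  ultimately have "h1 k \<otimes> inv (h2 k) = \<one>"
    using slice fiber_power_coord[OF c1] fiber_power_coord[OF c2] by (auto simp: coord_slice_def)
  then have "inv (inv (h2 k)) = h1 k"
    using inv_equality fiber_power_coord[OF c1] fiber_power_coord[OF c2] by blast
  then have "h1 k = h2 k" using fiber_power_coord[OF c2] by simp
  show "h1 = h2"
  proof (rule extensionalityI[OF fiber_power_extensional[OF c1] fiber_power_extensional[OF c2]])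
    fix i assume "i \<in> {..<Suc k}"
    then show "h1 i = h2 i" using agree \<open>h1 k = h2 k\<close> by (cases "i = k") auto
  qed
qed

lemma fiber_power_extend:
  assumes g: "g \<in> carrier (fiber_power G w)" and w: "0 < w"
    and x: "x \<in> carrier G" and ab: "ab_map G x = fp_ab G g"
  shows "(\<lambda>i\<in>{..<Suc w}. if i = w then x else g i) \<in> carrier (fiber_power G (Suc w))"
proof (rule fiber_powerI)
  have "ab_map G ((\<lambda>i\<in>{..<Suc w}. if i = w then x else g i) i) = ab_map G (g 0)" if "i < Suc w" for i
    using that ab fiber_power_ab_map_eq[OF g _ w, of i] by (auto simp: fp_ab_def less_Suc_eq)
  then show "ab_map G ((\<lambda>i\<in>{..<Suc w}. if i = w then x else g i) i)
      = ab_map G ((\<lambda>i\<in>{..<Suc w}. if i = w then x else g i) j)" if "i < Suc w" "j < Suc w" for i j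
    using that by metis
qed (use x fiber_power_coord[OF g] in auto)

lemma preimage_restrict_twisted_diagonal:
  assumes k: "0 < k" and f: "f \<in> {..<k} \<rightarrow> {..<w}" and \<phi>: "\<forall>i<k. aut_over_ab G (\<phi> i)"
  shows "{h \<in> carrier (fiber_power G (Suc k)). restrict h {..<k} \<in> twisted_diagonal k f \<phi> ` carrier (fiber_power G w)}
    = twisted_diagonal (Suc k) (f(k := w)) (\<phi>(k := (\<lambda>x. x))) ` carrier (fiber_power G (Suc w))"
  (is "?P = ?T")
proof
  show "?P \<subseteq> ?T"
  proof
    fix h assume "h \<in> ?P"
    then obtain g where h: "h \<in> carrier (fiber_power G (Suc k))" and g: "g \<in> carrier (fiber_power G w)"
      and hg: "restrict h {..<k} = twisted_diagonal k f \<phi> g" by blast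
    define g' where "g' = (\<lambda>i\<in>{..<Suc w}. if i = w then h k else g i)"
    have "ab_map G (h k) = fp_ab G (restrict h {..<k})"
      using fiber_power_ab_map_eq[OF h, of k 0] k by (simp add: fp_ab_def)
    also have "\<dots> = fp_ab G g" using fp_ab_twisted_diagonal[OF k f \<phi> g] hg by simp
    finally have "g' \<in> carrier (fiber_power G (Suc w))"
      unfolding g'_def using fiber_power_extend[OF g _ fiber_power_coord[OF h]] f k by auto
    moreover have "restrict g' {..<w} = g"
    proof (rule extensionalityI[OF _ fiber_power_extensional[OF g]])
      show "restrict g' {..<w} i = g i" if "i \<in> {..<w}" for i using that by (simp add: g'_def)
    qed simp
    then have "h = twisted_diagonal (Suc k) (f(k := w)) (\<phi>(k := (\<lambda>x. x))) g'"
      using twisted_diagonal_Suc_eq_iff[OF fiber_power_extensional[OF h]] hg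
        twisted_diagonal_restrict[OF f, of \<phi> g'] by (simp add: g'_def)
    ultimately show "h \<in> ?T" by blast
  qed
  show "?T \<subseteq> ?P"
  proof
    fix h assume "h \<in> ?T"
    then obtain g' where g': "g' \<in> carrier (fiber_power G (Suc w))"
      and h: "h = twisted_diagonal (Suc k) (f(k := w)) (\<phi>(k := (\<lambda>x. x))) g'" by blast
    have "f(k := w) \<in> {..<Suc k} \<rightarrow> {..<Suc w}" using f by (auto simp: less_Suc_eq)
    moreover have "\<forall>i<Suc k. aut_over_ab G ((\<phi>(k := (\<lambda>x. x))) i)" using \<phi> aut_over_ab_id by (simp add: less_Suc_eq)
    ultimately have "h \<in> carrier (fiber_power G (Suc k))" using h twisted_diagonal_in_fiber_power g' by blast
    moreover have "restrict h {..<k} = twisted_diagonal k f \<phi> (restrict g' {..<w})"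
    proof -
      have "h \<in> extensional {..<Suc k}" using h by (simp add: twisted_diagonal_def)
      then have "restrict h {..<k} = twisted_diagonal k f \<phi> g'"
        using twisted_diagonal_Suc_eq_iff h by blast
      then show ?thesis using twisted_diagonal_restrict[OF f, of \<phi> g'] by simp
    qed
    moreover have "restrict g' {..<w} \<in> carrier (fiber_power G w)"
      using hom_in_carrier[OF restrict_hom_fiber_power g'] by simp
    ultimately show "h \<in> ?P" by blast
  qed
qed

lemma subgroup_eq_twisted_diagonal_new_coord:
  assumes H: "subgroup H (fiber_power G (Suc k))" and k: "0 < k"
    and slice: "commutator_sub G \<subseteq> coord_slice H (Suc k) k"
    and f: "f \<in> {..<k} \<rightarrow> {..<w}" and \<phi>: "\<forall>i<k. aut_over_ab G (\<phi> i)"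
    and restr: "(\<lambda>h. restrict h {..<k}) ` H = twisted_diagonal k f \<phi> ` carrier (fiber_power G w)"
  shows "H = twisted_diagonal (Suc k) (f(k := w)) (\<phi>(k := (\<lambda>x. x))) ` carrier (fiber_power G (Suc w))"
proof -
  have "H = {h \<in> carrier (fiber_power G (Suc k)). restrict h {..<k} \<in> (\<lambda>h. restrict h {..<k}) ` H}"
    by (rule subgroup_eq_preimage_restrict[OF H k slice])
  also have "\<dots> = twisted_diagonal (Suc k) (f(k := w)) (\<phi>(k := (\<lambda>x. x))) ` carrier (fiber_power G (Suc w))"
    unfolding restr by (rule preimage_restrict_twisted_diagonal[OF k f \<phi>])
  finally show ?thesis .
qed

end

section \<open>Pseudosimple groups\<close>

lemma comm_group_of_comm_power:
  assumes S: "group S" and comm: "comm_group (product_group I (\<lambda>_. S))" and i: "i \<in> I"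
  shows "comm_group S"
proof (rule group.group_comm_groupI[OF S])
  fix x y assume x: "x \<in> carrier S" and y: "y \<in> carrier S"
  define ex where "ex = (\<lambda>j\<in>I. if j = i then x else \<one>\<^bsub>S\<^esub>)"
  define ey where "ey = (\<lambda>j\<in>I. if j = i then y else \<one>\<^bsub>S\<^esub>)"
  have "ex \<in> carrier (product_group I (\<lambda>_. S))" "ey \<in> carrier (product_group I (\<lambda>_. S))"
    using x y group.is_monoid[OF S] by (auto simp: ex_def ey_def)
  then have "(ex \<otimes>\<^bsub>product_group I (\<lambda>_. S)\<^esub> ey) i = (ey \<otimes>\<^bsub>product_group I (\<lambda>_. S)\<^esub> ex) i"
    using comm_groupE(4)[OF comm] by metis
  then show "x \<otimes>\<^bsub>S\<^esub> y = y \<otimes>\<^bsub>S\<^esub> x" using i by (simp add: ex_def ey_def)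
qed

text \<open>The consequences of pseudosimplicity used below: \<open>G'\<close> is nonabelian, and it lies in every
  nontrivial normal subgroup \<open>N\<close> because \<open>G/N\<close> is abelian.\<close>

locale pseudosimple_group = group +
  assumes finite_carrier: "finite (carrier G)"
    and derived_not_commutative: "\<exists>a\<in>commutator_sub G. \<exists>b\<in>commutator_sub G. a \<otimes> b \<noteq> b \<otimes> a"
    and derived_subset_normal: "\<And>N. N \<lhd> G \<Longrightarrow> N \<noteq> {\<one>} \<Longrightarrow> commutator_sub G \<subseteq> N"

lemma pseudosimple_imp_pseudosimple_group:
  fixes G :: "('a, 'b) monoid_scheme" (structure)
  assumes ps: "pseudosimple G"
  shows "pseudosimple_group G"
proof -
  have "group G" and fin: "finite (carrier G)" using ps unfolding pseudosimple_def by blast+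
  interpret group G by fact
  obtain S :: "'a monoid" and n :: nat where n: "1 \<le> n" and S: "simple_group S" "\<not> comm_group S"
    and iso: "G\<lparr>carrier := commutator_sub G\<rparr> \<cong> product_group {..<n} (\<lambda>_. S)"
    using ps unfolding pseudosimple_def by blast
  have grpS: "group S" using S(1) simple_group.axioms(1) by blast
  have D: "subgroup (commutator_sub G) G" by (rule derived_is_subgroup) simp
  have "\<not> comm_group (G\<lparr>carrier := commutator_sub G\<rparr>)"
  proof
    assume comm: "comm_group (G\<lparr>carrier := commutator_sub G\<rparr>)"
    have "group (product_group {..<n} (\<lambda>_. S))" using grpS by simp
    then have "comm_group (product_group {..<n} (\<lambda>_. S))"
      using comm_group.iso_imp_comm_group[OF comm iso group.is_monoid] by blast
    from comm_group_of_comm_power[OF grpS this, of 0] show False using S(2) n by simp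
  qed
  then have "\<exists>a\<in>commutator_sub G. \<exists>b\<in>commutator_sub G. a \<otimes> b \<noteq> b \<otimes> a"
    using group.group_comm_groupI[OF subgroup_imp_group[OF D]] by force
  moreover have "commutator_sub G \<subseteq> N" if "N \<lhd> G" "N \<noteq> {\<one>}" for N
    using derived_minimal ps that unfolding pseudosimple_def by blast
  ultimately show ?thesis using fin by unfold_locales
qed

context pseudosimple_group
begin

lemma aut_over_abI:
  assumes "\<sigma> \<in> hom G G" and "\<sigma> ` carrier G = carrier G"
    and "\<And>x. x \<in> carrier G \<Longrightarrow> ab_map G (\<sigma> x) = ab_map G x"
  shows "aut_over_ab G \<sigma>"
  using assms eq_card_imp_inj_on[OF finite_carrier, of \<sigma>] unfolding aut_over_ab_def iso_iff by auto

context
  fixes \<psi> :: "(nat \<Rightarrow> 'a) \<Rightarrow> 'a" and w :: nat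
  assumes \<psi>_hom: "\<psi> \<in> hom (fiber_power G w) G"
    and \<psi>_surj: "\<psi> ` carrier (fiber_power G w) = carrier G"
begin

lemma group_hom_\<psi>: "group_hom (fiber_power G w) G \<psi>"
  using group_fiber_power \<psi>_hom is_group by (simp add: group_hom_def group_hom_axioms_def)

lemma coord_image_trivial_or_full:
  assumes "j < w"
  shows "\<psi> ` coord_embed w j ` commutator_sub G = {\<one>}
    \<or> commutator_sub G \<subseteq> \<psi> ` coord_embed w j ` commutator_sub G"
  using derived_subset_normal normal.surj_hom_normal_subgroup[OF normal_coord_embed[OF assms] group_hom_\<psi> \<psi>_surj]
  by blast

lemma ex_full_coord_image: "\<exists>j<w. commutator_sub G \<subseteq> \<psi> ` coord_embed w j ` commutator_sub G"
proof (rule ccontr)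
  assume "\<not> ?thesis"
  then have triv: "\<psi> ` coord_embed w j ` commutator_sub G = {\<one>}" if "j < w" for j
    using coord_image_trivial_or_full that by blast
  interpret \<psi>: group_hom "fiber_power G w" G \<psi> by (rule group_hom_\<psi>)
  have ker: "d \<in> kernel (fiber_power G w) G \<psi>" if "d \<in> (\<Pi>\<^sub>E i\<in>{..<w}. commutator_sub G)" for d
  proof (rule subgroup_contains_derived_power[OF \<psi>.subgroup_kernel _ that, of UNIV])
    show "coord_embed w i ` commutator_sub G \<subseteq> kernel (fiber_power G w) G \<psi>" if "i < w" for i
      using triv[OF that] coord_embed_in_fiber_power by (auto simp: kernel_def)
  qed simp
  have "a \<otimes> b = b \<otimes> a" if a: "a \<in> carrier G" and b: "b \<in> carrier G" for a b
  proof -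
    obtain g h where g: "g \<in> carrier (fiber_power G w)" "a = \<psi> g"
      and h: "h \<in> carrier (fiber_power G w)" "b = \<psi> h"
      using a b unfolding \<psi>_surj[symmetric] by blast
    note gc = fiber_power_coord[OF g(1)] and hc = fiber_power_coord[OF h(1)]
    define d where "d = (\<lambda>i\<in>{..<w}. inv (g i) \<otimes> inv (h i) \<otimes> g i \<otimes> h i)"
    have "d \<in> kernel (fiber_power G w) G \<psi>"
      using commutator_in_derived[OF inv_closed inv_closed] gc hc by (intro ker) (auto simp: d_def)
    then have d: "d \<in> carrier (fiber_power G w)" "\<psi> d = \<one>" by (auto simp: kernel_def)
    have swap: "g \<otimes>\<^bsub>fiber_power G w\<^esub> h = (h \<otimes>\<^bsub>fiber_power G w\<^esub> g) \<otimes>\<^bsub>fiber_power G w\<^esub> d"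
      using gc hc swap_mult_commutator_eq by (auto simp: d_def intro!: restrict_ext)
    have "\<psi> g \<otimes> \<psi> h = \<psi> (g \<otimes>\<^bsub>fiber_power G w\<^esub> h)" by (rule \<psi>.hom_mult[OF g(1) h(1), symmetric])
    also have "\<dots> = \<psi> (h \<otimes>\<^bsub>fiber_power G w\<^esub> g) \<otimes> \<psi> d"
      unfolding swap by (rule \<psi>.hom_mult[OF \<psi>.G.m_closed[OF h(1) g(1)] d(1)])
    also have "\<dots> = \<psi> h \<otimes> \<psi> g" using \<psi>.hom_mult[OF h(1) g(1)] d(2) h(1) g(1) by simp
    finally show ?thesis using g(2) h(2) by simp
  qed
  moreover obtain a b where "a \<in> commutator_sub G" "b \<in> commutator_sub G" "a \<otimes> b \<noteq> b \<otimes> a"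
    using derived_not_commutative by blast
  ultimately show False using derived_subset_carrier by blast
qed

lemma full_coord_image_unique:
  assumes "i < w" "j < w"
    and full_i: "commutator_sub G \<subseteq> \<psi> ` coord_embed w i ` commutator_sub G"
    and full_j: "commutator_sub G \<subseteq> \<psi> ` coord_embed w j ` commutator_sub G"
  shows "i = j"
proof (rule ccontr)
  assume "i \<noteq> j"
  interpret \<psi>: group_hom "fiber_power G w" G \<psi> by (rule group_hom_\<psi>)
  have "a \<otimes> b = b \<otimes> a" if a: "a \<in> commutator_sub G" and b: "b \<in> commutator_sub G" for a b
  proof -
    obtain x y where x: "x \<in> commutator_sub G" "a = \<psi> (coord_embed w i x)"
      and y: "y \<in> commutator_sub G" "b = \<psi> (coord_embed w j y)"
      using full_i full_j a b by blast
    have "coord_embed w i x \<otimes>\<^bsub>fiber_power G w\<^esub> coord_embed w j y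
        = coord_embed w j y \<otimes>\<^bsub>fiber_power G w\<^esub> coord_embed w i x"
      using \<open>i \<noteq> j\<close> x(1) y(1) derived_subset_carrier
      by (auto simp: coord_embed_def subsetD intro!: restrict_ext)
    then show ?thesis using x y coord_embed_in_fiber_power by (metis \<psi>.hom_mult)
  qed
  then show False using derived_not_commutative by blast
qed

lemma hom_eq_on_diagonal:
  assumes j: "j < w"
    and others: "\<And>i. i < w \<Longrightarrow> i \<noteq> j \<Longrightarrow> \<psi> ` coord_embed w i ` commutator_sub G = {\<one>}"
    and g: "g \<in> carrier (fiber_power G w)"
  shows "\<psi> g = \<psi> (\<lambda>i\<in>{..<w}. g j)"
proof -
  interpret \<psi>: group_hom "fiber_power G w" G \<psi> by (rule group_hom_\<psi>)
  have c: "g i \<in> carrier G" if "i < w" for i using fiber_power_coord[OF g that] .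
  define d where "d = (\<lambda>i\<in>{..<w}. inv (g j) \<otimes> g i)"
  have dD: "d \<in> (\<Pi>\<^sub>E i\<in>{..<w}. commutator_sub G)"
    using ab_map_eq_iff_inv_mult[OF c[OF j] c] fiber_power_ab_map_eq[OF g j] by (auto simp: d_def)
  have "d \<in> kernel (fiber_power G w) G \<psi>"
  proof (rule subgroup_contains_derived_power[OF \<psi>.subgroup_kernel _ dD, of "- {j}"])
    show "coord_embed w i ` commutator_sub G \<subseteq> kernel (fiber_power G w) G \<psi>" if "i < w" "i \<in> - {j}" for i
      using others[of i] that coord_embed_in_fiber_power by (auto simp: kernel_def)
  qed (use c j in \<open>auto simp: d_def\<close>)
  then have d: "d \<in> carrier (fiber_power G w)" "\<psi> d = \<one>" by (auto simp: kernel_def)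
  have "(\<lambda>i\<in>{..<w}. g j) \<otimes>\<^bsub>fiber_power G w\<^esub> d = g"
  proof (rule extensionalityI[OF _ fiber_power_extensional[OF g]])
    fix i assume "i \<in> {..<w}"
    then show "((\<lambda>i\<in>{..<w}. g j) \<otimes>\<^bsub>fiber_power G w\<^esub> d) i = g i"
      using c j by (simp add: d_def m_assoc[symmetric])
  qed simp
  then have "\<psi> g = \<psi> (\<lambda>i\<in>{..<w}. g j) \<otimes> \<psi> d"
    using \<psi>.hom_mult[OF diagonal_in_fiber_power[OF c[OF j]] d(1)] by (simp only:)
  then show ?thesis using d(2) \<psi>.hom_closed[OF diagonal_in_fiber_power[OF c[OF j]]] by simp
qed

theorem hom_fiber_power_factors_through_coord:
  assumes over_ab: "\<And>g i. g \<in> carrier (fiber_power G w) \<Longrightarrow> i < w \<Longrightarrow> ab_map G (\<psi> g) = ab_map G (g i)"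
  shows "\<exists>j<w. \<exists>\<sigma>. aut_over_ab G \<sigma> \<and> (\<forall>g\<in>carrier (fiber_power G w). \<psi> g = \<sigma> (g j))"
proof -
  interpret \<psi>: group_hom "fiber_power G w" G \<psi> by (rule group_hom_\<psi>)
  obtain j where j: "j < w" and full: "commutator_sub G \<subseteq> \<psi> ` coord_embed w j ` commutator_sub G"
    using ex_full_coord_image by blast
  have others: "\<psi> ` coord_embed w i ` commutator_sub G = {\<one>}" if "i < w" "i \<noteq> j" for i
    using coord_image_trivial_or_full[OF that(1)] full_coord_image_unique[OF that(1) j _ full] that(2)
    by blast
  define \<sigma> where "\<sigma> x = \<psi> (\<lambda>i\<in>{..<w}. x)" for x
  have fac: "\<forall>g\<in>carrier (fiber_power G w). \<psi> g = \<sigma> (g j)"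
    using hom_eq_on_diagonal[OF j others] by (simp add: \<sigma>_def)
  have "\<sigma> \<in> hom G G"
  proof (rule homI)
    fix x y assume x: "x \<in> carrier G" and y: "y \<in> carrier G"
    have "(\<lambda>i\<in>{..<w}. x) \<otimes>\<^bsub>fiber_power G w\<^esub> (\<lambda>i\<in>{..<w}. y) = (\<lambda>i\<in>{..<w}. x \<otimes> y)"
      unfolding mult_fiber_power by (rule restrict_ext) simp
    then show "\<sigma> (x \<otimes> y) = \<sigma> x \<otimes> \<sigma> y"
      using \<psi>.hom_mult[OF diagonal_in_fiber_power[OF x] diagonal_in_fiber_power[OF y]]
      by (simp only: \<sigma>_def)
  qed (simp add: \<sigma>_def diagonal_in_fiber_power)
  moreover have "\<sigma> ` carrier G = carrier G"
  proof
    show "\<sigma> ` carrier G \<subseteq> carrier G" using diagonal_in_fiber_power by (auto simp: \<sigma>_def)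
    show "carrier G \<subseteq> \<sigma> ` carrier G"
    proof
      fix y assume "y \<in> carrier G"
      then obtain g where g: "g \<in> carrier (fiber_power G w)" "y = \<psi> g" using \<psi>_surj by (metis imageE)
      then show "y \<in> \<sigma> ` carrier G" using fac fiber_power_coord[OF g(1) j] by auto
    qed
  qed
  moreover have "ab_map G (\<sigma> x) = ab_map G x" if "x \<in> carrier G" for x
    using over_ab[OF diagonal_in_fiber_power[OF that] j] j by (simp add: \<sigma>_def)
  ultimately have "aut_over_ab G \<sigma>" by (rule aut_over_abI)
  then show ?thesis using fac j by blast
qed

end

context
  fixes H :: "(nat \<Rightarrow> 'a) set" and k w :: nat and f :: "nat \<Rightarrow> nat" and \<phi> :: "nat \<Rightarrow> 'a \<Rightarrow> 'a"
  assumes subgroup_H: "subgroup H (fiber_power G (Suc k))"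
    and last_coord_surj: "(\<lambda>h. h k) ` H = carrier G"
    and k_pos: "0 < k"
    and restrict_inj: "inj_on (\<lambda>h. restrict h {..<k}) H"
    and f_funcset: "f \<in> {..<k} \<rightarrow> {..<w}" and \<phi>_aut: "\<forall>i<k. aut_over_ab G (\<phi> i)"
    and restrict_H: "(\<lambda>h. restrict h {..<k}) ` H = twisted_diagonal k f \<phi> ` carrier (fiber_power G w)"
begin

definition graph_lift :: "(nat \<Rightarrow> 'a) \<Rightarrow> nat \<Rightarrow> 'a"
  where "graph_lift g = the_inv_into H (\<lambda>h. restrict h {..<k}) (twisted_diagonal k f \<phi> g)"

lemma graph_lift:
  assumes "g \<in> carrier (fiber_power G w)"
  shows graph_lift_in: "graph_lift g \<in> H"
    and restrict_graph_lift: "restrict (graph_lift g) {..<k} = twisted_diagonal k f \<phi> g"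
  using the_inv_into_into[OF restrict_inj] f_the_inv_into_f[OF restrict_inj] restrict_H assms
  unfolding graph_lift_def by auto

lemma graph_lift_unique:
  "h \<in> H \<Longrightarrow> restrict h {..<k} = twisted_diagonal k f \<phi> g \<Longrightarrow> graph_lift g = h"
  unfolding graph_lift_def by (rule the_inv_into_f_eq[OF restrict_inj])

lemma graph_lift_in_fiber_power:
  "g \<in> carrier (fiber_power G w) \<Longrightarrow> graph_lift g \<in> carrier (fiber_power G (Suc k))"
  using graph_lift_in subgroup.subset[OF subgroup_H] by blast

lemma subgroup_eq_graph_lift_image: "H = graph_lift ` carrier (fiber_power G w)"
proof
  show "H \<subseteq> graph_lift ` carrier (fiber_power G w)"
  proof
    fix h assume "h \<in> H"
    then obtain g where "g \<in> carrier (fiber_power G w)" "restrict h {..<k} = twisted_diagonal k f \<phi> g"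
      using restrict_H by blast
    then show "h \<in> graph_lift ` carrier (fiber_power G w)" using graph_lift_unique \<open>h \<in> H\<close> by blast
  qed
qed (use graph_lift_in in blast)

lemma last_coord_graph_lift_hom: "(\<lambda>g. graph_lift g k) \<in> hom (fiber_power G w) G"
proof (rule homI)
  show "graph_lift g k \<in> carrier G" if "g \<in> carrier (fiber_power G w)" for g
    using fiber_power_coord[OF graph_lift_in_fiber_power[OF that]] by simp
  fix g g' assume g: "g \<in> carrier (fiber_power G w)" and g': "g' \<in> carrier (fiber_power G w)"
  have "restrict (graph_lift g \<otimes>\<^bsub>fiber_power G (Suc k)\<^esub> graph_lift g') {..<k}
      = restrict (graph_lift g) {..<k} \<otimes>\<^bsub>fiber_power G k\<^esub> restrict (graph_lift g') {..<k}"
    using hom_mult[OF restrict_hom_fiber_power graph_lift_in_fiber_power[OF g] graph_lift_in_fiber_power[OF g']]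
    by (simp del: mult_fiber_power)
  also have "\<dots> = twisted_diagonal k f \<phi> (g \<otimes>\<^bsub>fiber_power G w\<^esub> g')"
    using restrict_graph_lift[OF g] restrict_graph_lift[OF g']
      hom_mult[OF twisted_diagonal_hom[OF f_funcset \<phi>_aut] g g'] by simp
  finally have "graph_lift (g \<otimes>\<^bsub>fiber_power G w\<^esub> g') = graph_lift g \<otimes>\<^bsub>fiber_power G (Suc k)\<^esub> graph_lift g'"
    using graph_lift_unique subgroup.m_closed[OF subgroup_H graph_lift_in[OF g] graph_lift_in[OF g']] by blast
  then show "graph_lift (g \<otimes>\<^bsub>fiber_power G w\<^esub> g') k = graph_lift g k \<otimes> graph_lift g' k" by simp
qed

lemma last_coord_graph_lift_surj: "(\<lambda>g. graph_lift g k) ` carrier (fiber_power G w) = carrier G"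
proof -
  have "(\<lambda>g. graph_lift g k) ` carrier (fiber_power G w) = (\<lambda>h. h k) ` graph_lift ` carrier (fiber_power G w)"
    by (simp add: image_image)
  also have "\<dots> = (\<lambda>h. h k) ` H" by (rule arg_cong[OF subgroup_eq_graph_lift_image[symmetric]])
  finally show ?thesis using last_coord_surj by simp
qed

lemma ab_map_last_coord_graph_lift:
  assumes g: "g \<in> carrier (fiber_power G w)" and i: "i < w"
  shows "ab_map G (graph_lift g k) = ab_map G (g i)"
proof -
  have "ab_map G (graph_lift g k) = fp_ab G (restrict (graph_lift g) {..<k})"
    using fiber_power_ab_map_eq[OF graph_lift_in_fiber_power[OF g], of k 0] k_pos by (simp add: fp_ab_def)
  also have "\<dots> = fp_ab G g"
    using restrict_graph_lift[OF g] fp_ab_twisted_diagonal[OF k_pos f_funcset \<phi>_aut g] by simp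
  also have "\<dots> = ab_map G (g i)" using fiber_power_ab_map_eq[OF g _ i, of 0] i by (simp add: fp_ab_def)
  finally show ?thesis .
qed

lemma subgroup_eq_twisted_diagonal_graph:
  "\<exists>j<w. \<exists>\<sigma>. aut_over_ab G \<sigma> \<and>
     H = twisted_diagonal (Suc k) (f(k := j)) (\<phi>(k := \<sigma>)) ` carrier (fiber_power G w)"
proof -
  obtain j \<sigma> where j: "j < w" and \<sigma>: "aut_over_ab G \<sigma>"
    and fac: "\<forall>g\<in>carrier (fiber_power G w). graph_lift g k = \<sigma> (g j)"
    using hom_fiber_power_factors_through_coord[OF last_coord_graph_lift_hom last_coord_graph_lift_surj
        ab_map_last_coord_graph_lift] by blast
  have "graph_lift g = twisted_diagonal (Suc k) (f(k := j)) (\<phi>(k := \<sigma>)) g"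
    if g: "g \<in> carrier (fiber_power G w)" for g
    using twisted_diagonal_Suc_eq_iff[OF fiber_power_extensional[OF graph_lift_in_fiber_power[OF g]]]
      restrict_graph_lift[OF g] fac g by simp
  then have "graph_lift ` carrier (fiber_power G w)
      = twisted_diagonal (Suc k) (f(k := j)) (\<phi>(k := \<sigma>)) ` carrier (fiber_power G w)"
    by (simp cong: image_cong)
  then have "H = twisted_diagonal (Suc k) (f(k := j)) (\<phi>(k := \<sigma>)) ` carrier (fiber_power G w)"
    by (rule trans[OF subgroup_eq_graph_lift_image])
  then show ?thesis using j \<sigma> by blast
qed

end

theorem subgroup_eq_twisted_diagonal_image:
  assumes "1 \<le> k" and "subgroup H (fiber_power G k)" and "\<forall>i<k. (\<lambda>h. h i) ` H = carrier G"
  shows "\<exists>w f \<phi>. f ` {..<k} = {..<w} \<and> (\<forall>i<k. aut_over_ab G (\<phi> i)) \<and>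
    H = twisted_diagonal k f \<phi> ` carrier (fiber_power G w)"
  using assms
proof (induction k arbitrary: H rule: nat_induct_at_least)
  case base
  then have "H = carrier (fiber_power G 1)" by (intro subgroup_fiber_power_one) auto
  then show ?case using twisted_diagonal_id_image aut_over_ab_id
    by (intro exI[of _ 1] exI[of _ "\<lambda>i. i"] exI[of _ "\<lambda>_ x. x"]) auto
next
  case (Suc k)
  let ?\<rho> = "\<lambda>h. restrict h {..<k}"
  have "group_hom (fiber_power G (Suc k)) (fiber_power G k) ?\<rho>"
    using restrict_hom_fiber_power group_fiber_power by (simp add: group_hom_def group_hom_axioms_def)
  then have "subgroup (?\<rho> ` H) (fiber_power G k)"
    by (rule group_hom.subgroup_img_is_subgroup[OF _ Suc.prems(1)])
  moreover have "\<forall>i<k. (\<lambda>h. h i) ` ?\<rho> ` H = carrier G" using Suc.prems(2) by (simp add: image_image)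
  ultimately obtain w f \<phi> where f: "f ` {..<k} = {..<w}" and \<phi>: "\<forall>i<k. aut_over_ab G (\<phi> i)"
    and restr: "?\<rho> ` H = twisted_diagonal k f \<phi> ` carrier (fiber_power G w)"
    using Suc.IH by meson
  have k: "0 < k" using Suc.hyps by simp
  have surj: "(\<lambda>h. h k) ` H = carrier G" using Suc.prems(2) by simp
  have "coord_slice H (Suc k) k \<lhd> G" using normal_coord_slice[OF Suc.prems(1) _ surj] by simp
  then consider "commutator_sub G \<subseteq> coord_slice H (Suc k) k" | "coord_slice H (Suc k) k = {\<one>}"
    using derived_subset_normal by blast
  then show ?case
  proof cases
    case 1
    have "f \<in> {..<k} \<rightarrow> {..<w}" using f by blast
    then have "H = twisted_diagonal (Suc k) (f(k := w)) (\<phi>(k := (\<lambda>x. x))) ` carrier (fiber_power G (Suc w))"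
      using subgroup_eq_twisted_diagonal_new_coord[OF Suc.prems(1) k 1 _ \<phi> restr] by blast
    moreover have "(f(k := w)) ` {..<Suc k} = {..<Suc w}"
      using image_fun_upd_lessThan_Suc[OF f] by (simp add: lessThan_Suc)
    moreover have "\<forall>i<Suc k. aut_over_ab G ((\<phi>(k := (\<lambda>x. x))) i)"
      using \<phi> aut_over_ab_id by (simp add: less_Suc_eq)
    ultimately show ?thesis by blast
  next
    case 2
    have fw: "f \<in> {..<k} \<rightarrow> {..<w}" using f by blast
    obtain j \<sigma> where j: "j < w" and \<sigma>: "aut_over_ab G \<sigma>"
      and "H = twisted_diagonal (Suc k) (f(k := j)) (\<phi>(k := \<sigma>)) ` carrier (fiber_power G w)"
      using subgroup_eq_twisted_diagonal_graph[OF Suc.prems(1) surj k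
          inj_on_restrict_subgroup[OF Suc.prems(1) 2] fw \<phi> restr] by blast
    moreover have "(f(k := j)) ` {..<Suc k} = {..<w}" using image_fun_upd_lessThan_Suc[OF f] j by auto
    moreover have "\<forall>i<Suc k. aut_over_ab G ((\<phi>(k := \<sigma>)) i)" using \<phi> \<sigma> by (simp add: less_Suc_eq)
    ultimately show ?thesis by blast
  qed
qed

end

theorem lemma6p1:
  fixes G :: "('a, 'b) monoid_scheme" and k :: nat and H :: "(nat \<Rightarrow> 'a) set"
  assumes "pseudosimple G"
    and "k \<ge> 1"
    and "subgroup H (fiber_power G k)"
    and "\<forall>i<k. (\<lambda>h. h i) ` H = carrier G"
  shows "\<exists>w \<le> k.
     (\<exists>\<iota>. \<iota> \<in> iso ((fiber_power G k)\<lparr>carrier := H\<rparr>) (fiber_power G w) \<and>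
          (\<forall>h \<in> H. fp_ab G (\<iota> h) = fp_ab G h)) \<and>
     (\<exists>(f :: nat \<Rightarrow> nat) (\<phi> :: nat \<Rightarrow> 'a \<Rightarrow> 'a).
          f \<in> {..<k} \<rightarrow> {..<w} \<and> f ` {..<k} = {..<w} \<and>
          (\<forall>i<k. aut_over_ab G (\<phi> i)) \<and>
          H = (\<lambda>g. \<lambda>i\<in>{..<k}. \<phi> i (g (f i))) ` carrier (fiber_power G w))"
proof -
  interpret pseudosimple_group G by (rule pseudosimple_imp_pseudosimple_group[OF assms(1)])
  obtain w f \<phi> where onto: "f ` {..<k} = {..<w}" and aut: "\<forall>i<k. aut_over_ab G (\<phi> i)"
    and H: "H = twisted_diagonal k f \<phi> ` carrier (fiber_power G w)"
    using subgroup_eq_twisted_diagonal_image[OF assms(2-4)] by blast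
  have f: "f \<in> {..<k} \<rightarrow> {..<w}" using onto by blast
  have "w \<le> k" using card_image_le[of "{..<k}" f] onto by simp
  define \<iota> where "\<iota> = inv_into (carrier (fiber_power G w)) (twisted_diagonal k f \<phi>)"
  have "\<iota> \<in> iso ((fiber_power G k)\<lparr>carrier := H\<rparr>) (fiber_power G w)"
    unfolding \<iota>_def H by (rule group.iso_set_sym[OF group_fiber_power twisted_diagonal_iso[OF onto aut]])
  moreover have "fp_ab G (\<iota> h) = fp_ab G h" if "h \<in> H" for h
  proof -
    have h: "h \<in> twisted_diagonal k f \<phi> ` carrier (fiber_power G w)" using that H by simp
    have "\<iota> h \<in> carrier (fiber_power G w)" "twisted_diagonal k f \<phi> (\<iota> h) = h"
      unfolding \<iota>_def using inv_into_into[OF h] f_inv_into_f[OF h] by auto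
    then show ?thesis using fp_ab_twisted_diagonal[OF _ f aut] assms(2) by fastforce
  qed
  ultimately show ?thesis
    using \<open>w \<le> k\<close> f onto aut H unfolding twisted_diagonal_def
    by (intro exI[of _ w] conjI exI[of _ \<iota>] exI[of _ f] exI[of _ \<phi>]) auto
qed

end
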